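(* Let $G_1$ and $G_2$ be non-empty graphs and $u\in V(G_1)$. Then $\mathrm{tww}(G_1(u\leftarrow G_2))=\max(\mathrm{tww}(G_1),\mathrm{tww}(G_2))$.
   Context: $G_1(u\leftarrow G_2)$ denotes the graph obtained from the disjoint union of $G_1-u$ and $G_2$ by making every vertex of $V(G_1)\setminus\{u\}$ that was adjacent to $u$ in $G_1$ adjacent to all vertices of $V(G_2)$. A trigraph $H$ consists of a vertex set $V(H)$ and two disjoint sets of unordered pairs of distinct vertices: black edges $E(H)$ and red edges $R(H)$. Two vertices are adjacent (neighbors) if they are joined by a black or a red edge. The red graph of $H$ is the graph $(V(H),R(H))$; $H$ is a $d$-trigraph if its red graph has maximum degree at most $d$. A graph is a trigraph with no red edges. Contracting two distinct vertices $u,v$ of a trigraph $H$ yields the trigraph obtained by deleting $u$ and $v$ and adding a new vertex $z$ such that, for every other vertex $x$: $zx$ is a black edge if both $ux$ and $vx$ are black edges; $zx$ is not an edge if $x$ is adjacent to neither $u$ nor $v$; and $zx$ is a red edge otherwise. All edges not incident to $u$ or $v$ are unchanged. A $d$-sequence of an $n$-vertex graph $G$ is a sequence of $d$-trigraphs $G=G_n,G_{n-1},\dots,G_1$ such that $G_1$ has a single vertex and each $G_{i-1}$ is obtained from $G_i$ by one contraction (so $G_i$ has $i$ vertices). The twin-width $\mathrm{tww}(G)$ of $G$ is the minimum $d$ such that $G$ admits a $d$-sequence. *)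

theory Defs
  imports Main
begin

type_synonym 'a trigraph = "'a set \<times> 'a set set \<times> 'a set set"

definition tverts :: "'a trigraph \<Rightarrow> 'a set" where
  "tverts H = fst H"
definition tblack :: "'a trigraph \<Rightarrow> 'a set set" where
  "tblack H = fst (snd H)"
definition tred :: "'a trigraph \<Rightarrow> 'a set set" where
  "tred H = snd (snd H)"

definition pairs_on :: "'a set \<Rightarrow> 'a set set" where
  "pairs_on V = {{x, y} | x y. x \<in> V \<and> y \<in> V \<and> x \<noteq> y}"

definition wf_trigraph :: "'a trigraph \<Rightarrow> bool" where
  "wf_trigraph H \<longleftrightarrow> finite (tverts H) \<and> tblack H \<subseteq> pairs_on (tverts H)
     \<and> tred H \<subseteq> pairs_on (tverts H) \<and> tblack H \<inter> tred H = {}"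

type_synonym 'a graph = "'a set \<times> 'a set set"

definition is_graph :: "'a graph \<Rightarrow> bool" where
  "is_graph G \<longleftrightarrow> finite (fst G) \<and> snd G \<subseteq> pairs_on (fst G)"

definition graph_trigraph :: "'a graph \<Rightarrow> 'a trigraph" where
  "graph_trigraph G = (fst G, snd G, {})"

definition tadj :: "'a trigraph \<Rightarrow> 'a \<Rightarrow> 'a \<Rightarrow> bool" where
  "tadj H x y \<longleftrightarrow> {x, y} \<in> tblack H \<union> tred H"

definition red_degree :: "'a trigraph \<Rightarrow> 'a \<Rightarrow> nat" where
  "red_degree H x = card {y \<in> tverts H. {x, y} \<in> tred H}"

definition is_d_trigraph :: "nat \<Rightarrow> 'a trigraph \<Rightarrow> bool" where
  "is_d_trigraph d H \<longleftrightarrow> wf_trigraph H \<and> (\<forall>x \<in> tverts H. red_degree H x \<le> d)"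

text \<open>Contraction of u and v into a new vertex z (z must not be one of the
  remaining vertices; reusing the name u or v is allowed since they are deleted).\<close>
definition contract :: "'a trigraph \<Rightarrow> 'a \<Rightarrow> 'a \<Rightarrow> 'a \<Rightarrow> 'a trigraph" where
  "contract H u v z =
    (let W = tverts H - {u, v} in
     (W \<union> {z},
      {e \<in> tblack H. u \<notin> e \<and> v \<notin> e}
        \<union> {{z, x} | x. x \<in> W \<and> {u, x} \<in> tblack H \<and> {v, x} \<in> tblack H},
      {e \<in> tred H. u \<notin> e \<and> v \<notin> e}
        \<union> {{z, x} | x. x \<in> W \<and> (tadj H u x \<or> tadj H v x)
                          \<and> \<not> ({u, x} \<in> tblack H \<and> {v, x} \<in> tblack H)}))"

definition contraction_step :: "'a trigraph \<Rightarrow> 'a trigraph \<Rightarrow> bool" where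
  "contraction_step H H' \<longleftrightarrow> (\<exists>u v z. u \<in> tverts H \<and> v \<in> tverts H \<and> u \<noteq> v
      \<and> z \<notin> tverts H - {u, v} \<and> H' = contract H u v z)"

text \<open>A d-sequence of the n-vertex graph G: list S = [G_n, ..., G_1].\<close>
definition d_sequence :: "nat \<Rightarrow> 'a graph \<Rightarrow> 'a trigraph list \<Rightarrow> bool" where
  "d_sequence d G S \<longleftrightarrow>
     length S = card (fst G) \<and> S \<noteq> [] \<and> S ! 0 = graph_trigraph G
     \<and> (\<forall>i < length S. is_d_trigraph d (S ! i) \<and> card (tverts (S ! i)) = card (fst G) - i)
     \<and> card (tverts (last S)) = 1
     \<and> (\<forall>i. Suc i < length S \<longrightarrow> contraction_step (S ! i) (S ! Suc i))"

definition twin_width :: "'a graph \<Rightarrow> nat" where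
  "twin_width G = (LEAST d. \<exists>S. d_sequence d G S)"

definition substitute :: "'a graph \<Rightarrow> 'a \<Rightarrow> 'b graph \<Rightarrow> ('a + 'b) graph" where
  "substitute G1 u G2 =
    (Inl ` (fst G1 - {u}) \<union> Inr ` fst G2,
     {Inl ` e | e. e \<in> snd G1 \<and> u \<notin> e}
       \<union> {Inr ` e | e. e \<in> snd G2}
       \<union> {{Inl x, Inr y} | x y. x \<in> fst G1 - {u} \<and> {u, x} \<in> snd G1 \<and> y \<in> fst G2})"

end

theory Submission
  imports Defs "HOL-Library.Disjoint_Sets"
begin

text \<open>
  Contracting sets of vertices of a graph \<open>G\<close> produces trigraphs whose vertices stand for the
  parts of a partition of \<open>V(G)\<close>: two parts are joined by a black edge when they are completely
  adjacent and by a red edge when they are mixed, i.e.\ some but not all pairs between them are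
  edges. Hence a \<open>d\<close>-sequence of \<open>G\<close> amounts to a sequence of partitions that starts from the
  singletons and merges two parts at a time, no part ever being mixed with more than \<open>d\<close> others.

  Such merge sequences can be transported along maps of vertex sets that reflect mixedness.
  Restricting a merge sequence of \<open>G\<^sub>1(u \<leftarrow> G\<^sub>2)\<close> to an induced copy of \<open>G\<^sub>1\<close> or of \<open>G\<^sub>2\<close>
  gives the lower bound. For the upper bound, first merge inside the copy of \<open>G\<^sub>2\<close> following a
  merge sequence of \<open>G\<^sub>2\<close>: every vertex outside this module sees all of it or none of it, so the
  singleton parts outside never become mixed. Then follow a merge sequence of \<open>G\<^sub>1\<close> in which
  the part containing \<open>u\<close> carries the whole module.
\<close>

section \<open>Contraction sequences\<close>

lemma wf_trigraph_edge:
  assumes "wf_trigraph H" "{x, y} \<in> tblack H \<union> tred H"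
  shows "x \<in> tverts H \<and> y \<in> tverts H \<and> x \<noteq> y"
  using assms unfolding wf_trigraph_def pairs_on_def by (auto simp: doubleton_eq_iff)

lemma tverts_contract: "tverts (contract H u v z) = tverts H - {u, v} \<union> {z}"
  by (simp add: contract_def tverts_def Let_def)

lemma tblack_contract:
  "tblack (contract H u v z) = {e \<in> tblack H. u \<notin> e \<and> v \<notin> e}
     \<union> {{z, x} | x. x \<in> tverts H - {u, v} \<and> {u, x} \<in> tblack H \<and> {v, x} \<in> tblack H}"
  by (simp add: contract_def tblack_def tverts_def Let_def)

lemma tred_contract:
  "tred (contract H u v z) = {e \<in> tred H. u \<notin> e \<and> v \<notin> e}
     \<union> {{z, x} | x. x \<in> tverts H - {u, v} \<and> (tadj H u x \<or> tadj H v x)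
                    \<and> \<not> ({u, x} \<in> tblack H \<and> {v, x} \<in> tblack H)}"
  by (simp add: contract_def tred_def tverts_def Let_def)

lemma wf_trigraph_contract:
  assumes wf: "wf_trigraph H" and z: "z \<notin> tverts H - {u, v}"
  shows "wf_trigraph (contract H u v z)"
proof -
  let ?W = "tverts H - {u, v}"
  have old: "e \<in> pairs_on (?W \<union> {z}) \<and> z \<notin> e"
    if "e \<in> tblack H \<union> tred H" "u \<notin> e" "v \<notin> e" for e
    using that wf z unfolding wf_trigraph_def pairs_on_def by blast
  have new: "{z, x} \<in> pairs_on (?W \<union> {z})" if "x \<in> ?W" for x
    using that z unfolding pairs_on_def by blast
  have "tblack (contract H u v z) \<subseteq> pairs_on (?W \<union> {z})"
    and "tred (contract H u v z) \<subseteq> pairs_on (?W \<union> {z})"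
    unfolding tblack_contract tred_contract using old new by blast+
  moreover have "tblack (contract H u v z) \<inter> tred (contract H u v z) = {}"
    unfolding tblack_contract tred_contract using old wf z unfolding wf_trigraph_def
    by (auto simp: doubleton_eq_iff)
  ultimately show ?thesis
    using wf unfolding wf_trigraph_def tverts_contract by simp
qed

lemma contract_edge_old:
  assumes "z \<notin> tverts H - {u, v}" "x \<in> tverts H - {u, v}" "y \<in> tverts H - {u, v}"
  shows "{x, y} \<in> tblack (contract H u v z) \<longleftrightarrow> {x, y} \<in> tblack H"
    and "{x, y} \<in> tred (contract H u v z) \<longleftrightarrow> {x, y} \<in> tred H"
  using assms unfolding tblack_contract tred_contract by (auto simp: doubleton_eq_iff)

lemma contract_edge_new:
  assumes "wf_trigraph H" "z \<notin> tverts H - {u, v}" "y \<in> tverts H - {u, v}"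
  shows "{z, y} \<in> tblack (contract H u v z) \<longleftrightarrow> {u, y} \<in> tblack H \<and> {v, y} \<in> tblack H"
    and "{z, y} \<in> tred (contract H u v z) \<longleftrightarrow>
      (tadj H u y \<or> tadj H v y) \<and> \<not> ({u, y} \<in> tblack H \<and> {v, y} \<in> tblack H)"
  using assms wf_trigraph_edge[OF assms(1), of z y] unfolding tblack_contract tred_contract
  by (auto simp: doubleton_eq_iff)

lemma card_tverts_contraction_step:
  assumes "wf_trigraph H" "contraction_step H H'"
  shows "card (tverts H') = card (tverts H) - 1"
proof -
  obtain u v z where uvz: "u \<in> tverts H" "v \<in> tverts H" "u \<noteq> v" "z \<notin> tverts H - {u, v}"
    and H': "H' = contract H u v z"
    using assms(2) unfolding contraction_step_def by blast
  have "finite (tverts H)"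
    using assms(1) unfolding wf_trigraph_def by blast
  moreover have "card {u, v} \<le> card (tverts H)"
    using calculation uvz by (intro card_mono) auto
  ultimately show ?thesis
    using uvz unfolding H' tverts_contract by (simp add: card_Diff_subset)
qed

inductive contractible :: "nat \<Rightarrow> 'a trigraph \<Rightarrow> bool" for d where
  contractible_done: "is_d_trigraph d H \<Longrightarrow> card (tverts H) = 1 \<Longrightarrow> contractible d H"
| contractible_step: "is_d_trigraph d H \<Longrightarrow> contraction_step H H' \<Longrightarrow> contractible d H'
    \<Longrightarrow> contractible d H"

lemma contractible_if_sequence:
  assumes "S \<noteq> []" "\<forall>H\<in>set S. is_d_trigraph d H" "card (tverts (last S)) = 1"
    and "\<forall>i. Suc i < length S \<longrightarrow> contraction_step (S ! i) (S ! Suc i)"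
  shows "contractible d (hd S)"
  using assms
proof (induction S)
  case Nil
  then show ?case by simp
next
  case (Cons H S)
  show ?case
  proof (cases "S = []")
    case True
    then show ?thesis
      using Cons.prems by (auto intro: contractible_done)
  next
    case False
    have "contraction_step H (hd S)"
      using Cons.prems(4) False by (force simp: hd_conv_nth)
    moreover have "contractible d (hd S)"
      using Cons.IH False Cons.prems(2,3) Cons.prems(4)[rule_format, of "Suc _"] by simp
    ultimately show ?thesis
      using Cons.prems(2) by (auto intro: contractible_step)
  qed
qed

lemma sequence_if_contractible:
  assumes "contractible d H"
  shows "\<exists>S. S \<noteq> [] \<and> S ! 0 = H \<and> length S = card (tverts H)
     \<and> (\<forall>i < length S. is_d_trigraph d (S ! i) \<and> card (tverts (S ! i)) = card (tverts H) - i)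
     \<and> card (tverts (last S)) = 1
     \<and> (\<forall>i. Suc i < length S \<longrightarrow> contraction_step (S ! i) (S ! Suc i))"
  using assms
proof (induction rule: contractible.induct)
  case (contractible_done H)
  then show ?case
    by (intro exI[of _ "[H]"]) auto
next
  case (contractible_step H H')
  then obtain S where S: "S \<noteq> []" "S ! 0 = H'" "length S = card (tverts H')"
    "\<forall>i < length S. is_d_trigraph d (S ! i) \<and> card (tverts (S ! i)) = card (tverts H') - i"
    "card (tverts (last S)) = 1" "\<forall>i. Suc i < length S \<longrightarrow> contraction_step (S ! i) (S ! Suc i)"
    by blast
  have card: "card (tverts H') = card (tverts H) - 1" "card (tverts H') \<ge> 1"
    using card_tverts_contraction_step contractible_step.hyps S(1,3)
    unfolding is_d_trigraph_def by (blast, cases S, auto)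
  show ?case
  proof (intro exI[of _ "H # S"] conjI allI impI)
    fix i
    assume "i < length (H # S)"
    then show "is_d_trigraph d ((H # S) ! i)" "card (tverts ((H # S) ! i)) = card (tverts H) - i"
      using S(4) card contractible_step.hyps(1) by (cases i; auto)+
  next
    fix i
    assume "Suc i < length (H # S)"
    then show "contraction_step ((H # S) ! i) ((H # S) ! Suc i)"
      using S(2,6) contractible_step.hyps(2) by (cases i) auto
  qed (use S card in auto)
qed

lemma d_sequence_iff_contractible:
  "(\<exists>S. d_sequence d G S) \<longleftrightarrow> contractible d (graph_trigraph G)"
proof
  assume "\<exists>S. d_sequence d G S"
  then obtain S where "d_sequence d G S" ..
  then show "contractible d (graph_trigraph G)"
    using contractible_if_sequence[of S d] unfolding d_sequence_def
    by (auto simp: all_set_conv_all_nth hd_conv_nth)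
next
  have "card (tverts (graph_trigraph G)) = card (fst G)"
    by (simp add: graph_trigraph_def tverts_def)
  moreover assume "contractible d (graph_trigraph G)"
  ultimately show "\<exists>S. d_sequence d G S"
    using sequence_if_contractible unfolding d_sequence_def by metis
qed

section \<open>Merge sequences of partitions\<close>

definition complete_between :: "'a graph \<Rightarrow> 'a set \<Rightarrow> 'a set \<Rightarrow> bool" where
  "complete_between G A B \<longleftrightarrow> (\<forall>a\<in>A. \<forall>b\<in>B. {a, b} \<in> snd G)"

definition mixed :: "'a graph \<Rightarrow> 'a set \<Rightarrow> 'a set \<Rightarrow> bool" where
  "mixed G A B \<longleftrightarrow> (\<exists>a\<in>A. \<exists>b\<in>B. {a, b} \<in> snd G) \<and> \<not> complete_between G A B"

lemma complete_between_commute: "complete_between G A B \<longleftrightarrow> complete_between G B A"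
  unfolding complete_between_def by (metis insert_commute)

lemma mixed_commute: "mixed G A B \<longleftrightarrow> mixed G B A"
  unfolding mixed_def complete_between_commute[of G A B] by (metis insert_commute)

lemma complete_between_Un:
  "complete_between G (A \<union> B) C \<longleftrightarrow> complete_between G A C \<and> complete_between G B C"
  unfolding complete_between_def by blast

lemma mixed_Un:
  assumes "A \<noteq> {}" "B \<noteq> {}" "C \<noteq> {}"
  shows "mixed G (A \<union> B) C \<longleftrightarrow>
    (complete_between G A C \<or> mixed G A C \<or> complete_between G B C \<or> mixed G B C)
    \<and> \<not> (complete_between G A C \<and> complete_between G B C)"
  using assms unfolding mixed_def complete_between_def by blast

lemma not_mixed_singletons: "\<not> mixed G {a} {b}"
  unfolding mixed_def complete_between_def by auto

lemma mixed_transfer: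
  assumes "\<forall>p\<in>A. f p \<in> X" "\<forall>q\<in>B. f q \<in> Y"
    and "\<forall>p\<in>A. \<forall>q\<in>B. {p, q} \<in> snd G \<longleftrightarrow> {f p, f q} \<in> snd H"
    and "mixed G A B"
  shows "mixed H X Y"
  using assms unfolding mixed_def complete_between_def by metis

definition represents :: "'a graph \<Rightarrow> 'b trigraph \<Rightarrow> ('b \<Rightarrow> 'a set) \<Rightarrow> bool" where
  "represents G H P \<longleftrightarrow> wf_trigraph H \<and> (\<forall>x\<in>tverts H. P x \<noteq> {})
     \<and> (\<forall>x\<in>tverts H. \<forall>y\<in>tverts H. x \<noteq> y \<longrightarrow> P x \<inter> P y = {}
          \<and> ({x, y} \<in> tblack H \<longleftrightarrow> complete_between G (P x) (P y))
          \<and> ({x, y} \<in> tred H \<longleftrightarrow> mixed G (P x) (P y)))"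

lemma represents_wf: "represents G H P \<Longrightarrow> wf_trigraph H"
  unfolding represents_def by blast

lemma represents_inj_on:
  assumes "represents G H P"
  shows "inj_on P (tverts H)"
proof (rule inj_onI, rule ccontr)
  fix x y assume "x \<in> tverts H" "y \<in> tverts H" "P x = P y" "x \<noteq> y"
  with assms show False unfolding represents_def by fastforce
qed

lemma represents_contract:
  assumes rep: "represents G H P" and uv: "u \<in> tverts H" "v \<in> tverts H" "u \<noteq> v"
    and z: "z \<notin> tverts H - {u, v}"
  shows "represents G (contract H u v z) (P(z := P u \<union> P v))"
proof -
  let ?W = "tverts H - {u, v}" and ?P' = "P(z := P u \<union> P v)" and ?H = "contract H u v z"
  have wf: "wf_trigraph H"
    and ne: "\<And>x. x \<in> tverts H \<Longrightarrow> P x \<noteq> {}"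
    and edge: "\<And>x y. \<lbrakk>x \<in> tverts H; y \<in> tverts H; x \<noteq> y\<rbrakk> \<Longrightarrow> P x \<inter> P y = {}
      \<and> ({x, y} \<in> tblack H \<longleftrightarrow> complete_between G (P x) (P y))
      \<and> ({x, y} \<in> tred H \<longleftrightarrow> mixed G (P x) (P y))"
    using rep unfolding represents_def by blast+
  have unchanged: "?P' x = P x" if "x \<in> ?W" for x
    using that z by auto
  have merged: "?P' z \<inter> ?P' y = {}
      \<and> ({z, y} \<in> tblack ?H \<longleftrightarrow> complete_between G (?P' z) (?P' y))
      \<and> ({z, y} \<in> tred ?H \<longleftrightarrow> mixed G (?P' z) (?P' y))" if y: "y \<in> ?W" for y
  proof -
    have yH: "y \<in> tverts H" "y \<noteq> u" "y \<noteq> v"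
      using y by auto
    have black: "{w, y} \<in> tblack H \<longleftrightarrow> complete_between G (P w) (P y)"
      and adj: "tadj H w y \<longleftrightarrow> complete_between G (P w) (P y) \<or> mixed G (P w) (P y)"
      and disj: "P w \<inter> P y = {}" if "w \<in> {u, v}" for w
      using that yH uv edge[of w y] unfolding tadj_def by auto
    show ?thesis
      unfolding contract_edge_new[OF wf z y] unchanged[OF y] fun_upd_same
        mixed_Un[OF ne[OF uv(1)] ne[OF uv(2)] ne[OF yH(1)]] complete_between_Un
      using black adj disj by auto
  qed
  have "?P' x \<inter> ?P' y = {}
      \<and> ({x, y} \<in> tblack ?H \<longleftrightarrow> complete_between G (?P' x) (?P' y))
      \<and> ({x, y} \<in> tred ?H \<longleftrightarrow> mixed G (?P' x) (?P' y))"
    if xy: "x \<in> ?W \<union> {z}" "y \<in> ?W \<union> {z}" "x \<noteq> y" for x y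
  proof -
    consider "x = z" "y \<in> ?W" | "y = z" "x \<in> ?W" | "x \<in> ?W" "y \<in> ?W"
      using xy by blast
    then show ?thesis
    proof cases
      case 1
      then show ?thesis using merged by blast
    next
      case 2
      then show ?thesis
        using merged[of x] by (simp add: insert_commute Int_commute complete_between_commute mixed_commute)
    next
      case 3
      then show ?thesis
        unfolding contract_edge_old[OF z 3] unchanged[OF 3(1)] unchanged[OF 3(2)] using xy edge by blast
    qed
  qed
  moreover have "?P' x \<noteq> {}" if "x \<in> ?W \<union> {z}" for x
    using that ne uv by auto
  ultimately show ?thesis
    unfolding represents_def tverts_contract using wf_trigraph_contract[OF wf z] by blast
qed

lemma represents_image_contract:
  assumes rep: "represents G H P" and uv: "u \<in> tverts H" "v \<in> tverts H"
    and z: "z \<notin> tverts H - {u, v}"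
  shows "(P(z := P u \<union> P v)) ` tverts (contract H u v z) = P ` tverts H - {P u, P v} \<union> {P u \<union> P v}"
proof -
  have "(P(z := P u \<union> P v)) ` (tverts H - {u, v}) = P ` (tverts H - {u, v})"
    using z by (intro image_cong) auto
  also have "\<dots> = P ` tverts H - {P u, P v}"
    using represents_inj_on[OF rep] uv by (auto simp: inj_on_eq_iff)
  finally show ?thesis
    unfolding tverts_contract image_Un by simp
qed

definition red_bounded :: "nat \<Rightarrow> 'a graph \<Rightarrow> 'a set set \<Rightarrow> bool" where
  "red_bounded d G PP \<longleftrightarrow> (\<forall>A\<in>PP. card {B \<in> PP. B \<noteq> A \<and> mixed G A B} \<le> d)"

lemma red_degree_represents:
  assumes rep: "represents G H P" and x: "x \<in> tverts H"
  shows "red_degree H x = card {B \<in> P ` tverts H. B \<noteq> P x \<and> mixed G (P x) B}"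
proof -
  have inj: "inj_on P (tverts H)"
    using represents_inj_on[OF rep] .
  have "{B \<in> P ` tverts H. B \<noteq> P x \<and> mixed G (P x) B} = P ` {y \<in> tverts H. {x, y} \<in> tred H}"
    using rep x wf_trigraph_edge[OF represents_wf[OF rep], of x] inj_onD[OF inj _ x]
    unfolding represents_def by fastforce
  then show ?thesis
    unfolding red_degree_def by (simp add: card_image inj_on_subset[OF inj])
qed

lemma is_d_trigraph_iff_red_bounded:
  assumes "represents G H P"
  shows "is_d_trigraph d H \<longleftrightarrow> red_bounded d G (P ` tverts H)"
  using assms represents_wf[OF assms] red_degree_represents[OF assms]
  unfolding is_d_trigraph_def red_bounded_def by auto

inductive merge_sequence :: "nat \<Rightarrow> 'a graph \<Rightarrow> 'a set set \<Rightarrow> bool" for d G where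
  merge_done: "card PP = 1 \<Longrightarrow> merge_sequence d G PP"
| merge_step: "red_bounded d G PP \<Longrightarrow> A \<in> PP \<Longrightarrow> B \<in> PP \<Longrightarrow> A \<noteq> B
    \<Longrightarrow> merge_sequence d G (PP - {A, B} \<union> {A \<union> B}) \<Longrightarrow> merge_sequence d G PP"

lemma red_bounded_card_1: "card PP = 1 \<Longrightarrow> red_bounded d G PP"
  unfolding red_bounded_def by (clarsimp simp: card_1_singleton_iff) (simp add: Collect_conv_if)

lemma merge_sequence_if_contractible:
  assumes "contractible d H" "represents G H P"
  shows "merge_sequence d G (P ` tverts H)"
  using assms
proof (induction arbitrary: P rule: contractible.induct)
  case (contractible_done H)
  then show ?case
    by (intro merge_done) (simp add: card_image represents_inj_on)
next
  case (contractible_step H H')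
  then obtain u v z where uvz: "u \<in> tverts H" "v \<in> tverts H" "u \<noteq> v" "z \<notin> tverts H - {u, v}"
    and H': "H' = contract H u v z"
    unfolding contraction_step_def by blast
  have "merge_sequence d G ((P(z := P u \<union> P v)) ` tverts H')"
    using contractible_step.IH represents_contract[OF contractible_step.prems uvz] H' by blast
  then have "merge_sequence d G (P ` tverts H - {P u, P v} \<union> {P u \<union> P v})"
    unfolding H' represents_image_contract[OF contractible_step.prems uvz(1,2,4)] .
  moreover have "P u \<noteq> P v"
    using represents_inj_on[OF contractible_step.prems] uvz by (auto simp: inj_on_def)
  ultimately show ?case
    using contractible_step.hyps(1) uvz is_d_trigraph_iff_red_bounded[OF contractible_step.prems]
    by (auto intro: merge_step)
qed

lemma contractible_if_merge_sequence:
  assumes "merge_sequence d G PP" "represents G H P" "PP = P ` tverts H"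
  shows "contractible d H"
  using assms
proof (induction arbitrary: H P rule: merge_sequence.induct)
  case (merge_done PP)
  have "card (tverts H) = 1"
    using merge_done card_image[OF represents_inj_on[OF merge_done.prems(1)]] by simp
  moreover have "is_d_trigraph d H"
    using is_d_trigraph_iff_red_bounded[OF merge_done.prems(1)] red_bounded_card_1 merge_done
    by simp
  ultimately show ?case
    by (intro contractible_done)
next
  case (merge_step PP A B)
  then obtain u v where uv: "u \<in> tverts H" "v \<in> tverts H" "u \<noteq> v" "A = P u" "B = P v"
    by blast
  have z: "u \<notin> tverts H - {u, v}"
    by blast
  have "is_d_trigraph d H"
    using is_d_trigraph_iff_red_bounded[OF merge_step.prems(1)] merge_step by simp
  moreover have "contraction_step H (contract H u v u)"
    unfolding contraction_step_def using uv z by blast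
  moreover have "contractible d (contract H u v u)"
    using merge_step.IH represents_contract[OF merge_step.prems(1) uv(1-3) z]
      represents_image_contract[OF merge_step.prems(1) uv(1,2) z] merge_step.prems(2) uv(4,5)
    by simp
  ultimately show ?case
    by (rule contractible_step)
qed

lemma contractible_iff_merge_sequence:
  assumes "represents G H P"
  shows "contractible d H \<longleftrightarrow> merge_sequence d G (P ` tverts H)"
  using assms merge_sequence_if_contractible contractible_if_merge_sequence by blast

abbreviation singletons :: "'a set \<Rightarrow> 'a set set" where
  "singletons V \<equiv> (\<lambda>x. {x}) ` V"

lemma represents_graph_trigraph:
  assumes "is_graph G"
  shows "represents G (graph_trigraph G) (\<lambda>x. {x})"
proof -
  have "tverts (graph_trigraph G) = fst G" "tblack (graph_trigraph G) = snd G"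
    "tred (graph_trigraph G) = {}"
    by (simp_all add: graph_trigraph_def tverts_def tblack_def tred_def)
  then show ?thesis
    using assms unfolding represents_def is_graph_def wf_trigraph_def
    by (simp add: complete_between_def not_mixed_singletons)
qed

lemma d_sequence_iff_merge_sequence:
  assumes "is_graph G"
  shows "(\<exists>S. d_sequence d G S) \<longleftrightarrow> merge_sequence d G (singletons (fst G))"
proof -
  have "tverts (graph_trigraph G) = fst G"
    by (simp add: graph_trigraph_def tverts_def)
  then show ?thesis
    unfolding d_sequence_iff_contractible
      contractible_iff_merge_sequence[OF represents_graph_trigraph[OF assms]]
    by simp
qed

lemma red_bounded_mono: "red_bounded d G PP \<Longrightarrow> d \<le> d' \<Longrightarrow> red_bounded d' G PP"
  unfolding red_bounded_def by (meson le_trans)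

lemma merge_sequence_mono:
  assumes "merge_sequence d G PP" "d \<le> d'"
  shows "merge_sequence d' G PP"
  using assms
proof (induction rule: merge_sequence.induct)
  case (merge_done PP)
  then show ?case by (simp add: merge_sequence.merge_done)
next
  case (merge_step PP A B)
  show ?case
    using merge_step.hyps(2-4) merge_step.IH[OF merge_step.prems]
    by (rule merge_sequence.merge_step[OF red_bounded_mono[OF merge_step.hyps(1) merge_step.prems]])
qed

lemma red_bounded_card: "finite PP \<Longrightarrow> red_bounded (card PP) G PP"
  unfolding red_bounded_def by (auto intro: card_mono)

lemma merge_sequence_card:
  assumes "finite PP" "PP \<noteq> {}"
  shows "merge_sequence (card PP) G PP"
  using assms
proof (induction "card PP" arbitrary: PP rule: less_induct)
  case less
  show ?case
  proof (cases "card PP = 1")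
    case True
    then show ?thesis by (rule merge_done)
  next
    case False
    have "\<not> card PP \<le> Suc 0"
      using False less.prems by (auto simp: le_Suc_eq)
    then obtain A B where AB: "A \<in> PP" "B \<in> PP" "A \<noteq> B"
      using card_le_Suc0_iff_eq[OF less.prems(1)] by blast
    let ?M = "PP - {A, B} \<union> {A \<union> B}"
    have "card ?M \<le> card (PP - {A, B}) + 1"
      using card_Un_le[of "PP - {A, B}" "{A \<union> B}"] by simp
    also have "\<dots> < card PP"
      using AB less.prems(1) \<open>\<not> card PP \<le> Suc 0\<close> by (simp add: card_Diff_subset)
    finally have less_card: "card ?M < card PP" .
    then have "merge_sequence (card ?M) G ?M"
      using less.hyps less.prems(1) by simp
    then have "merge_sequence (card PP) G ?M"
      using less_card by (rule merge_sequence_mono[OF _ less_imp_le])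
    then show ?thesis
      by (rule merge_step[OF red_bounded_card[OF less.prems(1)] AB])
  qed
qed

lemma twin_width_merge_sequence:
  assumes "is_graph G" "fst G \<noteq> {}"
  shows "merge_sequence (twin_width G) G (singletons (fst G))"
proof -
  have "merge_sequence (card (singletons (fst G))) G (singletons (fst G))"
    using assms by (intro merge_sequence_card) (auto simp: is_graph_def)
  then show ?thesis
    unfolding twin_width_def d_sequence_iff_merge_sequence[OF assms(1)] by (rule LeastI)
qed

lemma twin_width_le:
  assumes "is_graph G" "merge_sequence d G (singletons (fst G))"
  shows "twin_width G \<le> d"
  unfolding twin_width_def d_sequence_iff_merge_sequence[OF assms(1)] using assms(2) by (rule Least_le)

section \<open>Transporting merge sequences\<close>

lemma partition_on_merge:
  assumes "partition_on V PP" "A \<in> PP" "B \<in> PP"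
  shows "partition_on V (PP - {A, B} \<union> {A \<union> B})"
proof -
  have "disjoint PP" "{} \<notin> PP" "\<Union>PP = V"
    using assms(1) unfolding partition_on_def by blast+
  moreover have "\<Union>(PP - {A, B} \<union> {A \<union> B}) = \<Union>PP"
    using assms(2,3) by blast
  moreover have "(A \<union> B) \<inter> X = {}" if "X \<in> PP - {A, B}" for X
    using that assms(2,3) \<open>disjoint PP\<close> unfolding disjoint_def by blast
  ultimately show ?thesis
    using assms(2) unfolding partition_on_def disjoint_def by auto
qed

lemma partition_on_subset: "partition_on V PP \<Longrightarrow> X \<in> PP \<Longrightarrow> X \<subseteq> V"
  by (auto dest: partition_onD1)

lemma partition_on_disjoint:
  "partition_on V PP \<Longrightarrow> X \<in> PP \<Longrightarrow> Y \<in> PP \<Longrightarrow> X \<noteq> Y \<Longrightarrow> X \<inter> Y = {}"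
  by (auto dest: partition_onD2 disjointD)

lemma red_bounded_image:
  assumes bounded: "red_bounded d G PP" and part: "partition_on (fst G) PP" and fin: "finite PP"
    and mixed_h: "\<And>X Y. X \<subseteq> fst G \<Longrightarrow> Y \<subseteq> fst G \<Longrightarrow> X \<inter> Y = {} \<Longrightarrow>
      mixed G' (h X) (h Y) \<Longrightarrow> mixed G X Y"
    and mixed_C: "\<And>c X. c \<in> C \<Longrightarrow> X \<subseteq> fst G \<Longrightarrow> \<not> mixed G' c (h X)"
    and mixed_CC: "\<And>c c'. c \<in> C \<Longrightarrow> c' \<in> C \<Longrightarrow> \<not> mixed G' c c'"
  shows "red_bounded d G' (h ` PP - {{}} \<union> C)"
  unfolding red_bounded_def
proof
  let ?Q = "h ` PP - {{}} \<union> C"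
  fix A' assume A': "A' \<in> ?Q"
  have no_mixed_C: "\<not> mixed G' c B'" if "c \<in> C" "B' \<in> ?Q" for c B'
    using that mixed_C mixed_CC partition_on_subset[OF part] by blast
  show "card {B' \<in> ?Q. B' \<noteq> A' \<and> mixed G' A' B'} \<le> d"
  proof (cases "A' \<in> C")
    case True
    then have none: "{B' \<in> ?Q. B' \<noteq> A' \<and> mixed G' A' B'} = {}"
      using no_mixed_C by blast
    show ?thesis
      unfolding none by simp
  next
    case False
    then obtain X where X: "X \<in> PP" "A' = h X"
      using A' by blast
    have "{B' \<in> ?Q. B' \<noteq> A' \<and> mixed G' A' B'} \<subseteq> h ` {Y \<in> PP. Y \<noteq> X \<and> mixed G X Y}"
    proof
      fix B' assume B': "B' \<in> {B' \<in> ?Q. B' \<noteq> A' \<and> mixed G' A' B'}"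
      have "B' \<notin> C"
        using B' no_mixed_C[OF _ A'] mixed_commute[of G' A' B'] by blast
      then obtain Y where Y: "Y \<in> PP" "B' = h Y"
        using B' by blast
      have "X \<inter> Y = {}"
        using B' X Y partition_on_disjoint[OF part X(1) Y(1)] by blast
      moreover have "mixed G' (h X) (h Y)"
        using B' X Y by simp
      ultimately have "mixed G X Y"
        using mixed_h partition_on_subset[OF part X(1)] partition_on_subset[OF part Y(1)] by blast
      then show "B' \<in> h ` {Y \<in> PP. Y \<noteq> X \<and> mixed G X Y}"
        using X Y B' by blast
    qed
    then have "card {B' \<in> ?Q. B' \<noteq> A' \<and> mixed G' A' B'}
        \<le> card (h ` {Y \<in> PP. Y \<noteq> X \<and> mixed G X Y})"
      using fin by (intro card_mono) auto
    also have "\<dots> \<le> card {Y \<in> PP. Y \<noteq> X \<and> mixed G X Y}"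
      using fin by (intro card_image_le) auto
    also have "\<dots> \<le> d"
      using bounded X unfolding red_bounded_def by blast
    finally show ?thesis .
  qed
qed

lemma image_merge:
  assumes part: "partition_on V PP" and AB: "A \<in> PP" "B \<in> PP"
    and h_Un: "\<And>X Y. h (X \<union> Y) = h X \<union> h Y"
    and h_disjoint: "\<And>X Y. X \<subseteq> V \<Longrightarrow> Y \<subseteq> V \<Longrightarrow> X \<inter> Y = {} \<Longrightarrow> h X \<inter> h Y = {}"
    and disjoint_C: "\<And>c X. c \<in> C \<Longrightarrow> X \<subseteq> V \<Longrightarrow> c \<inter> h X = {}"
  shows "h A = {} \<or> h B = {} \<Longrightarrow>
      h ` (PP - {A, B} \<union> {A \<union> B}) - {{}} \<union> C = h ` PP - {{}} \<union> C"
    and "h A \<noteq> {} \<Longrightarrow> h B \<noteq> {} \<Longrightarrow>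
      h ` (PP - {A, B} \<union> {A \<union> B}) - {{}} \<union> C = (h ` PP - {{}} \<union> C) - {h A, h B} \<union> {h A \<union> h B}"
proof -
  have image_merged: "h ` (PP - {A, B} \<union> {A \<union> B}) = h ` (PP - {A, B}) \<union> {h A \<union> h B}"
    using h_Un by simp
  have image_PP: "h ` PP = h ` (PP - {A, B}) \<union> {h A, h B}"
    using AB by blast
  show "h A = {} \<or> h B = {} \<Longrightarrow> h ` (PP - {A, B} \<union> {A \<union> B}) - {{}} \<union> C = h ` PP - {{}} \<union> C"
    unfolding image_merged image_PP by auto
  assume nonempty: "h A \<noteq> {}" "h B \<noteq> {}"
  have "h A \<notin> C" "h B \<notin> C"
    using nonempty disjoint_C AB partition_on_subset[OF part] by blast+
  moreover have "h X \<noteq> h A \<and> h X \<noteq> h B" if "X \<in> PP - {A, B}" for X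
  proof -
    have "X \<subseteq> V" "A \<subseteq> V" "B \<subseteq> V" "X \<inter> A = {}" "X \<inter> B = {}"
      using that AB partition_on_subset[OF part] partition_on_disjoint[OF part] by auto
    then show ?thesis
      using h_disjoint nonempty by (metis Int_absorb)
  qed
  ultimately show "h ` (PP - {A, B} \<union> {A \<union> B}) - {{}} \<union> C
      = (h ` PP - {{}} \<union> C) - {h A, h B} \<union> {h A \<union> h B}"
    unfolding image_merged image_PP using nonempty by auto
qed

text \<open>The parts in \<open>C\<close> are carried along unchanged, and parts with empty image drop out.\<close>

lemma merge_sequence_image:
  assumes merge: "merge_sequence d G PP" and part: "partition_on (fst G) PP" and fin: "finite (fst G)"
    and h_Un: "\<And>X Y. h (X \<union> Y) = h X \<union> h Y"
    and h_disjoint: "\<And>X Y. X \<subseteq> fst G \<Longrightarrow> Y \<subseteq> fst G \<Longrightarrow> X \<inter> Y = {} \<Longrightarrow> h X \<inter> h Y = {}"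
    and mixed_h: "\<And>X Y. X \<subseteq> fst G \<Longrightarrow> Y \<subseteq> fst G \<Longrightarrow> X \<inter> Y = {} \<Longrightarrow>
      mixed G' (h X) (h Y) \<Longrightarrow> mixed G X Y"
    and mixed_C: "\<And>c X. c \<in> C \<Longrightarrow> X \<subseteq> fst G \<Longrightarrow> \<not> mixed G' c (h X)"
    and mixed_CC: "\<And>c c'. c \<in> C \<Longrightarrow> c' \<in> C \<Longrightarrow> \<not> mixed G' c c'"
    and disjoint_C: "\<And>c X. c \<in> C \<Longrightarrow> X \<subseteq> fst G \<Longrightarrow> c \<inter> h X = {}"
    and "d \<le> d'"
    and final: "merge_sequence d' G' ({h (fst G)} - {{}} \<union> C)"
  shows "merge_sequence d' G' (h ` PP - {{}} \<union> C)"
  using merge part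
proof (induction rule: merge_sequence.induct)
  case (merge_done PP)
  then have "PP = {fst G}"
    by (auto simp: card_1_singleton_iff dest: partition_onD1)
  then show ?case
    using final by simp
next
  case (merge_step PP A B)
  let ?Q = "h ` PP - {{}} \<union> C"
  have IH: "merge_sequence d' G' (h ` (PP - {A, B} \<union> {A \<union> B}) - {{}} \<union> C)"
    using merge_step.IH partition_on_merge[OF merge_step.prems merge_step.hyps(2,3)] .
  show ?case
  proof (cases "h A = {} \<or> h B = {}")
    case True
    have "h ` (PP - {A, B} \<union> {A \<union> B}) - {{}} \<union> C = ?Q"
      by (rule image_merge(1)[OF merge_step.prems merge_step.hyps(2,3)])
        (fact h_Un h_disjoint disjoint_C True)+
    then show ?thesis
      using IH by simp
  next
    case False
    then have nonempty: "h A \<noteq> {}" "h B \<noteq> {}"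
      by auto
    have AB: "A \<subseteq> fst G" "B \<subseteq> fst G" "A \<inter> B = {}"
      using merge_step.hyps(2-4) partition_on_subset[OF merge_step.prems]
        partition_on_disjoint[OF merge_step.prems] by auto
    have parts: "h A \<in> ?Q" "h B \<in> ?Q" "h A \<noteq> h B"
      using nonempty h_disjoint[OF AB] merge_step.hyps(2,3) by auto
    have "red_bounded d G' ?Q"
      by (rule red_bounded_image[OF merge_step.hyps(1) merge_step.prems
            finite_elements[OF fin merge_step.prems]])
        (use mixed_h mixed_C mixed_CC in blast)+
    then have red: "red_bounded d' G' ?Q"
      using \<open>d \<le> d'\<close> by (rule red_bounded_mono)
    have "h ` (PP - {A, B} \<union> {A \<union> B}) - {{}} \<union> C = ?Q - {h A, h B} \<union> {h A \<union> h B}"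
      by (rule image_merge(2)[OF merge_step.prems merge_step.hyps(2,3)])
        (fact h_Un h_disjoint disjoint_C nonempty)+
    then show ?thesis
      using IH by (simp add: merge_sequence.merge_step[OF red parts])
  qed
qed

lemma preimage_singletons:
  assumes "inj_on g V" "g ` V \<subseteq> W"
  shows "(\<lambda>X. {v \<in> V. g v \<in> X}) ` singletons W - {{}} = singletons V"
proof -
  have preimage: "{w \<in> V. g w \<in> {g v}} = {v}" if "v \<in> V" for v
    using that assms(1) unfolding inj_on_def by auto
  show ?thesis
  proof (intro equalityI subsetI)
    fix Z
    assume "Z \<in> (\<lambda>X. {v \<in> V. g v \<in> X}) ` singletons W - {{}}"
    then obtain v where "v \<in> V" "Z = {w \<in> V. g w \<in> {g v}}"
      by auto
    then show "Z \<in> singletons V"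
      using preimage by simp
  next
    fix Z
    assume "Z \<in> singletons V"
    then obtain v where "v \<in> V" "Z = {w \<in> V. g w \<in> {g v}}"
      using preimage by auto
    then show "Z \<in> (\<lambda>X. {v \<in> V. g v \<in> X}) ` singletons W - {{}}"
      using assms(2) preimage by auto
  qed
qed

definition induced_embedding :: "('a \<Rightarrow> 'c) \<Rightarrow> 'a graph \<Rightarrow> 'c graph \<Rightarrow> bool" where
  "induced_embedding g G H \<longleftrightarrow> inj_on g (fst G) \<and> g ` fst G \<subseteq> fst H
     \<and> (\<forall>a\<in>fst G. \<forall>b\<in>fst G. a \<noteq> b \<longrightarrow> ({a, b} \<in> snd G \<longleftrightarrow> {g a, g b} \<in> snd H))"

lemma twin_width_le_of_induced_embedding:
  assumes G: "is_graph G" "fst G \<noteq> {}" and H: "is_graph H" and emb: "induced_embedding g G H"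
  shows "twin_width G \<le> twin_width H"
proof -
  have inj: "inj_on g (fst G)" and into: "g ` fst G \<subseteq> fst H"
    and edge: "\<And>a b. \<lbrakk>a \<in> fst G; b \<in> fst G; a \<noteq> b\<rbrakk> \<Longrightarrow> {a, b} \<in> snd G \<longleftrightarrow> {g a, g b} \<in> snd H"
    using emb unfolding induced_embedding_def by blast+
  have finH: "finite (fst H)" and neH: "fst H \<noteq> {}"
    using H G into unfolding is_graph_def by auto
  define h where "h X = {v \<in> fst G. g v \<in> X}" for X
  have "h ` singletons (fst H) - {{}} = singletons (fst G)"
    unfolding h_def using inj into by (rule preimage_singletons)
  moreover have "merge_sequence (twin_width H) G (h ` singletons (fst H) - {{}} \<union> {})"
  proof (rule merge_sequence_image[OF twin_width_merge_sequence[OF H neH] partition_on_singletons finH])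
    fix X Y
    assume disj: "X \<inter> Y = {}" and mixed: "mixed G (h X) (h Y)"
    show "mixed H X Y"
    proof (rule mixed_transfer[where f = g, OF _ _ _ mixed])
      show "\<forall>p\<in>h X. \<forall>q\<in>h Y. {p, q} \<in> snd G \<longleftrightarrow> {g p, g q} \<in> snd H"
      proof (intro ballI)
        fix p q assume "p \<in> h X" "q \<in> h Y"
        then have "p \<in> fst G" "q \<in> fst G" "p \<noteq> q"
          using disj unfolding h_def by auto
        then show "{p, q} \<in> snd G \<longleftrightarrow> {g p, g q} \<in> snd H"
          by (rule edge)
      qed
    qed (auto simp: h_def)
  next
    have "h (fst H) = fst G"
      using into unfolding h_def by auto
    then show "merge_sequence (twin_width H) G ({h (fst H)} - {{}} \<union> {})"
      using G(2) by (simp add: merge_done)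
  qed (auto simp: h_def)
  ultimately show ?thesis
    using twin_width_le[OF G(1)] by simp
qed

section \<open>Substitution\<close>

lemma doubleton_eq_image_iff: "inj f \<Longrightarrow> {f a, f b} = f ` e \<longleftrightarrow> e = {a, b}"
  by (metis image_empty image_insert inj_image_eq_iff)

lemma substitute_edge_Inr_Inr:
  "{Inr a, Inr b} \<in> snd (substitute G1 u G2) \<longleftrightarrow> {a, b} \<in> snd G2"
proof -
  have "{Inr a, Inr b} \<noteq> Inl ` e" for e :: "'a set"
    by (metis Inr_not_Inl imageE insertI1)
  then show ?thesis
    unfolding substitute_def by (auto simp: doubleton_eq_image_iff doubleton_eq_iff)
qed

lemma substitute_edge_Inl_Inl:
  "{Inl a, Inl b} \<in> snd (substitute G1 u G2) \<longleftrightarrow> {a, b} \<in> snd G1 \<and> a \<noteq> u \<and> b \<noteq> u"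
proof -
  have "{Inl a, Inl b} \<noteq> Inr ` e" for e :: "'b set"
    by (metis Inr_not_Inl imageE insertI1)
  then show ?thesis
    unfolding substitute_def by (auto simp: doubleton_eq_image_iff doubleton_eq_iff)
qed

lemma substitute_edge_Inl_Inr:
  "{Inl a, Inr b} \<in> snd (substitute G1 u G2)
    \<longleftrightarrow> a \<in> fst G1 - {u} \<and> {u, a} \<in> snd G1 \<and> b \<in> fst G2"
proof -
  have "{Inl a, Inr b} \<noteq> Inr ` e" "{Inl a, Inr b} \<noteq> Inl ` e'" for e :: "'b set" and e' :: "'a set"
    by (metis Inr_not_Inl imageE insertI1 insert_commute)+
  then show ?thesis
    unfolding substitute_def by (auto simp: doubleton_eq_iff)
qed

lemma fst_substitute: "fst (substitute G1 u G2) = Inl ` (fst G1 - {u}) \<union> Inr ` fst G2"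
  by (simp add: substitute_def)

lemma is_graph_substitute:
  assumes "is_graph G1" "is_graph G2"
  shows "is_graph (substitute G1 u G2)"
  using assms unfolding is_graph_def substitute_def pairs_on_def by fastforce

lemma substitute_edge_projection:
  assumes "p \<in> fst (substitute G1 u G2)" "q \<in> fst (substitute G1 u G2)"
    and "p \<in> range Inl \<or> q \<in> range Inl"
  shows "{p, q} \<in> snd (substitute G1 u G2)
    \<longleftrightarrow> {case_sum id (\<lambda>_. u) p, case_sum id (\<lambda>_. u) q} \<in> snd G1"
  using assms unfolding fst_substitute
  by (auto simp: substitute_edge_Inl_Inl substitute_edge_Inl_Inr insert_commute)

lemma induced_embedding_substitute_Inr: "induced_embedding Inr G2 (substitute G1 u G2)"
  unfolding induced_embedding_def fst_substitute by (auto simp: substitute_edge_Inr_Inr)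

lemma induced_embedding_substitute_Inl:
  assumes "w \<in> fst G2"
  shows "induced_embedding (\<lambda>v. if v = u then Inr w else Inl v) G1 (substitute G1 u G2)"
  using assms unfolding induced_embedding_def fst_substitute inj_on_def
  by (auto simp: substitute_edge_Inl_Inl substitute_edge_Inl_Inr insert_commute)

lemma merge_sequence_substitute_collapsed:
  assumes G1: "is_graph G1" "u \<in> fst G1" and G2: "fst G2 \<noteq> {}"
    and merge: "merge_sequence d G1 (singletons (fst G1))" and "d \<le> d'"
  shows "merge_sequence d' (substitute G1 u G2) (singletons (Inl ` (fst G1 - {u})) \<union> {Inr ` fst G2})"
proof -
  let ?S = "substitute G1 u G2" and ?proj = "case_sum id (\<lambda>_. u)"
  define h where "h X = Inl ` (X - {u}) \<union> (if u \<in> X then Inr ` fst G2 else {})" for X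
  have h_mem: "p \<in> fst ?S \<and> ?proj p \<in> X \<and> (p \<in> range Inl \<or> u \<in> X)"
    if "p \<in> h X" "X \<subseteq> fst G1" for p X
    using that unfolding h_def fst_substitute by (auto split: if_splits)
  have "h ` singletons (fst G1) = singletons (Inl ` (fst G1 - {u})) \<union> {Inr ` fst G2}"
  proof -
    have "h ` singletons (fst G1) = h ` singletons (fst G1 - {u}) \<union> {h {u}}"
      using G1(2) by blast
    moreover have "h {u} = Inr ` fst G2"
      and "h ` singletons (fst G1 - {u}) = singletons (Inl ` (fst G1 - {u}))"
      unfolding h_def by auto
    ultimately show ?thesis
      by simp
  qed
  moreover have "merge_sequence d' ?S (h ` singletons (fst G1) - {{}} \<union> {})"
  proof (rule merge_sequence_image[OF merge partition_on_singletons])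
    fix X Y
    assume XY: "X \<subseteq> fst G1" "Y \<subseteq> fst G1" "X \<inter> Y = {}" and mixed: "mixed ?S (h X) (h Y)"
    show "mixed G1 X Y"
    proof (rule mixed_transfer[where f = ?proj, OF _ _ _ mixed])
      show "\<forall>p\<in>h X. \<forall>q\<in>h Y. {p, q} \<in> snd ?S \<longleftrightarrow> {?proj p, ?proj q} \<in> snd G1"
      proof (intro ballI)
        fix p q assume "p \<in> h X" "q \<in> h Y"
        then have "p \<in> fst ?S" "q \<in> fst ?S" "p \<in> range Inl \<or> q \<in> range Inl"
          using h_mem[of p X] h_mem[of q Y] XY by auto
        then show "{p, q} \<in> snd ?S \<longleftrightarrow> {?proj p, ?proj q} \<in> snd G1"
          by (rule substitute_edge_projection)
      qed
      show "\<forall>p\<in>h X. ?proj p \<in> X" "\<forall>q\<in>h Y. ?proj q \<in> Y"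
        using h_mem XY by auto
    qed
  next
    show "merge_sequence d' ?S ({h (fst G1)} - {{}} \<union> {})"
      using G1(2) G2 unfolding h_def by (auto intro: merge_done)
  qed (use G1 \<open>d \<le> d'\<close> in \<open>auto simp: h_def is_graph_def\<close>)
  moreover have "{} \<notin> singletons (Inl ` (fst G1 - {u})) \<union> {Inr ` fst G2}"
    using G2 by auto
  ultimately show ?thesis
    by simp
qed

lemma merge_sequence_substitute:
  fixes G1 :: "'a graph" and G2 :: "'b graph"
  assumes G2: "is_graph G2" "fst G2 \<noteq> {}"
    and merge: "merge_sequence d G2 (singletons (fst G2))" and "d \<le> d'"
    and collapsed: "merge_sequence d' (substitute G1 u G2)
      (singletons (Inl ` (fst G1 - {u})) \<union> {Inr ` fst G2})"
  shows "merge_sequence d' (substitute G1 u G2) (singletons (fst (substitute G1 u G2)))"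
proof -
  let ?S = "substitute G1 u G2" and ?C = "singletons (Inl ` (fst G1 - {u})) :: ('a + 'b) set set"
  have "merge_sequence d' ?S ((`) Inr ` singletons (fst G2) - {{}} \<union> ?C)"
  proof (rule merge_sequence_image[OF merge partition_on_singletons])
    fix X Y
    assume mixed: "mixed ?S (Inr ` X) (Inr ` Y)"
    show "mixed G2 X Y"
      by (rule mixed_transfer[where f = projr, OF _ _ _ mixed]) (auto simp: substitute_edge_Inr_Inr)
  next
    fix c X
    assume "c \<in> ?C" "X \<subseteq> fst G2"
    then obtain a where "c = {Inl a}" "a \<in> fst G1 - {u}"
      by blast
    then show "\<not> mixed ?S c (Inr ` X)"
      using \<open>X \<subseteq> fst G2\<close> unfolding mixed_def complete_between_def
      by (auto simp: substitute_edge_Inl_Inr)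
  next
    fix c c'
    assume "c \<in> ?C" "c' \<in> ?C"
    then show "\<not> mixed ?S c c'"
      by (auto simp: not_mixed_singletons)
  next
    show "merge_sequence d' ?S ({Inr ` fst G2} - {{}} \<union> ?C)"
      using collapsed G2(2) by (simp add: Un_commute)
  qed (use G2 \<open>d \<le> d'\<close> in \<open>auto simp: is_graph_def\<close>)
  moreover have "(`) Inr ` singletons (fst G2) - {{}} \<union> ?C = singletons (fst ?S)"
    unfolding fst_substitute by auto
  ultimately show ?thesis
    by simp
qed

lemma twin_width_substitute_le:
  assumes G1: "is_graph G1" "fst G1 \<noteq> {}" "u \<in> fst G1" and G2: "is_graph G2" "fst G2 \<noteq> {}"
  shows "twin_width (substitute G1 u G2) \<le> max (twin_width G1) (twin_width G2)"
proof -
  have "merge_sequence (max (twin_width G1) (twin_width G2)) (substitute G1 u G2)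
      (singletons (Inl ` (fst G1 - {u})) \<union> {Inr ` fst G2})"
    by (rule merge_sequence_substitute_collapsed[OF G1(1,3) G2(2) twin_width_merge_sequence[OF G1(1,2)]])
      simp
  then have "merge_sequence (max (twin_width G1) (twin_width G2)) (substitute G1 u G2)
      (singletons (fst (substitute G1 u G2)))"
    by (rule merge_sequence_substitute[OF G2 twin_width_merge_sequence[OF G2] max.cobounded2])
  then show ?thesis
    using is_graph_substitute[OF G1(1) G2(1)] by (rule twin_width_le[rotated])
qed

theorem mainTheorem17:
  fixes G1 :: "'a graph" and G2 :: "'b graph" and u :: 'a
  assumes "is_graph G1" and "is_graph G2"
    and "fst G1 \<noteq> {}" and "fst G2 \<noteq> {}"
    and "u \<in> fst G1"
  shows "twin_width (substitute G1 u G2) = max (twin_width G1) (twin_width G2)"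
proof -
  let ?S = "substitute G1 u G2"
  have S: "is_graph ?S"
    using assms(1,2) by (rule is_graph_substitute)
  obtain w where "w \<in> fst G2"
    using assms(4) by blast
  have "twin_width G1 \<le> twin_width ?S"
    using assms(1,3) S induced_embedding_substitute_Inl[OF \<open>w \<in> fst G2\<close>]
    by (rule twin_width_le_of_induced_embedding)
  moreover have "twin_width G2 \<le> twin_width ?S"
    using assms(2,4) S induced_embedding_substitute_Inr by (rule twin_width_le_of_induced_embedding)
  moreover have "twin_width ?S \<le> max (twin_width G1) (twin_width G2)"
    using assms by (intro twin_width_substitute_le)
  ultimately show ?thesis
    by simp
qed

end
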